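(* Let $\mathbb K\in\{\mathbb R,\mathbb C\}$ and fix a family of Taylor sheaves. For $i=1,2$, let $V_i$ be a finite-dimensional $\mathbb K$-linear space, $U_i\subset V_i$ an open subset, and $M_i\subset U_i$ a closed subset endowed with the structure induced from $(V_i,\mathcal F^{V_i})$, and let $\mathrm T M_i$ be endowed with the structure induced from $\mathrm T V_i=V_i\times V_i$. Then for every smooth map $\psi:M_1\to M_2$, the differential $d\psi:\mathrm T M_1\to\mathrm T M_2$ is smooth.
   Context: A space with a sheaf of $\mathbb K$-valued functions is a topological space $M$ with, for each open $U$, a $\mathbb K$-algebra $\mathcal F(U)$ of functions $U\to\mathbb K$ (containing constants), closed under restriction and such that locally-$\mathcal F$ functions are in $\mathcal F$. $\mathcal F_p$ denotes the stalk of germs at $p$ and $\mathfrak m_p$ the ideal of germs vanishing at $p$; the sheaf is local if germs outside $\mathfrak m_p$ are invertible. A continuous map is smooth if composition with it sends local functions of the target sheaf into the source sheaf. The induced structure on a subset is the subspace topology with the sheaf of functions locally equal to restrictions of functions of the ambient sheaf. Taylor sheaves: every finite-dimensional $\mathbb K$-linear space $V$ carries a topology and a local sheaf $\mathcal F^V$ with: (1) the topology is the weakest making all of $\mathcal F^V(V)$ continuous; (2) $V^*\subset\mathcal F^V(V)$; (3) for open $U\subset V$, $\psi:U\to W$ ($W$ finite-dimensional) is smooth iff $\varphi\circ\psi\in\mathcal F^V(U)$ for all $\varphi\in W^*$; (4) for each $p\in V$, $V^*\to\mathfrak m_p/\mathfrak m_p^2$, $\varphi\mapsto(\varphi-\varphi(p))_p$,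 is an isomorphism (so each $f\in\mathcal F^V(U)$, $p\in U$, determines a unique $df_p\in V^*$ with $f_p-f(p)-(df_p-df_p(p))_p\in\mathfrak m_p^2$); (5) for $f\in\mathcal F^V(U)$, the function $(p,v)\mapsto df_p(v)$ lies in $\mathcal F^{V\oplus V}(U\times V)$. The space $V\oplus V=V\times V$ carries its Taylor sheaf structure. For a space $M$ with sheaf $\mathcal F$ and $p\in M$, the tangent space $\mathrm T_pM$ is the $\mathbb K$-linear space of derivations at $p$: $\mathbb K$-linear $t:\mathcal F_p\to\mathbb K$ with $t(g_1g_2)=g_1(p)t(g_2)+g_2(p)t(g_1)$; $\mathrm T M=\bigsqcup_{p\in M}\mathrm T_pM$. For a smooth map $\psi:M\to N$, the differential $d\psi:\mathrm TM\to\mathrm TN$ sends $t\in\mathrm T_pM$ to $d\psi_p t\in\mathrm T_{\psi(p)}N$, $(d\psi_p t)(f)=t(f\circ\psi)$. For $M\subset V$ with induced structure, $\mathrm T_pM$ is identified (via the differential of the inclusion) with a subspace of $\mathrm T_pV$, and $\mathrm T_pV$ is identified with $V$ by $t\mapsto$ the unique $v\in V$ with $\varphi(v)=t(\varphi)$ for all $\varphi\in V^*$; this gives an injection $\mathrm T M\hookrightarrow V\times V$, $t\in \mathrm T_pM\mapsto(p,v)$, and $\mathrm TM$ is given the structure induced from $V\times V=\mathrm TV$. *)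

theory Defs
  imports "HOL-Analysis.Analysis"
begin

text \<open>The scalar field K (either the reals or the complex numbers) is
modelled as a subset of the complex numbers.  A finite-dimensional K-linear space of
dimension n is modelled as K^n, realised as the set of coordinate functions
nat \<Rightarrow> complex with K-valued coordinates below n and zero coordinates from n on.
A function on an open set U is a total function whose values outside U are irrelevant;
a sheaf is a map sending each open set U to a set of such functions.\<close>

type_synonym pt = "nat \<Rightarrow> complex"
type_synonym sheaf = "pt set \<Rightarrow> (pt \<Rightarrow> complex) set"

definition kvec :: "complex set \<Rightarrow> nat \<Rightarrow> pt set" where
  "kvec K n = {x. (\<forall>i<n. x i \<in> K) \<and> (\<forall>i\<ge>n. x i = 0)}"

definition kdual :: "complex set \<Rightarrow> nat \<Rightarrow> (pt \<Rightarrow> complex) set" where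
  "kdual K n = {\<phi>. (\<forall>x\<in>kvec K n. \<phi> x \<in> K)
      \<and> (\<forall>x\<in>kvec K n. \<forall>y\<in>kvec K n. \<phi> (\<lambda>i. x i + y i) = \<phi> x + \<phi> y)
      \<and> (\<forall>c\<in>K. \<forall>x\<in>kvec K n. \<phi> (\<lambda>i. c * x i) = c * \<phi> x)}"

text \<open>The direct sum K^n \<oplus> K^n realised as K^(2n).\<close>
definition join :: "nat \<Rightarrow> pt \<Rightarrow> pt \<Rightarrow> pt" where
  "join n x y = (\<lambda>i. if i < n then x i else y (i - n))"

definition fstp :: "nat \<Rightarrow> pt \<Rightarrow> pt" where
  "fstp n z = (\<lambda>i. if i < n then z i else 0)"

definition sndp :: "nat \<Rightarrow> pt \<Rightarrow> pt" where
  "sndp n z = (\<lambda>i. if i < n then z (i + n) else 0)"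

definition sheaf_space :: "complex set \<Rightarrow> pt topology \<Rightarrow> sheaf \<Rightarrow> bool" where
  "sheaf_space K X F \<longleftrightarrow>
     (\<forall>U. openin X U \<longrightarrow>
        (\<forall>f\<in>F U. \<forall>x\<in>U. f x \<in> K)
      \<and> (\<forall>c\<in>K. (\<lambda>_. c) \<in> F U)
      \<and> (\<forall>f\<in>F U. \<forall>g\<in>F U. (\<lambda>x. f x + g x) \<in> F U \<and> (\<lambda>x. f x * g x) \<in> F U)
      \<and> (\<forall>f\<in>F U. \<forall>g. (\<forall>x\<in>U. g x = f x) \<longrightarrow> g \<in> F U)
      \<and> (\<forall>W. openin X W \<and> W \<subseteq> U \<longrightarrow> F U \<subseteq> F W)
      \<and> (\<forall>g. (\<forall>x\<in>U. \<exists>W. openin X W \<and> x \<in> W \<and> W \<subseteq> U \<and> g \<in> F W) \<longrightarrow> g \<in> F U))"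

definition local_sheaf :: "pt topology \<Rightarrow> sheaf \<Rightarrow> bool" where
  "local_sheaf X F \<longleftrightarrow>
     (\<forall>U f p. openin X U \<and> p \<in> U \<and> f \<in> F U \<and> f p \<noteq> 0 \<longrightarrow>
        (\<exists>W g. openin X W \<and> p \<in> W \<and> W \<subseteq> U \<and> g \<in> F W \<and> (\<forall>x\<in>W. f x * g x = 1)))"

text \<open>The germ at p of g lies in the square of the maximal ideal m_p.\<close>
definition in_msq :: "pt topology \<Rightarrow> sheaf \<Rightarrow> pt \<Rightarrow> (pt \<Rightarrow> complex) \<Rightarrow> bool" where
  "in_msq X F p g \<longleftrightarrow>
     (\<exists>W (m::nat) a b. openin X W \<and> p \<in> W \<and>
        (\<forall>j<m. a j \<in> F W \<and> b j \<in> F W \<and> a j p = 0 \<and> b j p = 0) \<and>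
        (\<forall>x\<in>W. g x = (\<Sum>j<m. a j x * b j x)))"

text \<open>Structure induced on a subset M.  (The topology is subtopology X M.)\<close>
definition induced_sheaf :: "pt topology \<Rightarrow> sheaf \<Rightarrow> pt set \<Rightarrow> sheaf" where
  "induced_sheaf X F M U =
     {f. \<forall>p\<in>U. \<exists>W. openin X W \<and> p \<in> W \<and> (\<exists>g\<in>F W. \<forall>x\<in>U \<inter> W. f x = g x)}"

definition smooth_map :: "pt topology \<Rightarrow> sheaf \<Rightarrow> pt topology \<Rightarrow> sheaf \<Rightarrow> (pt \<Rightarrow> pt) \<Rightarrow> bool" where
  "smooth_map X F Y G \<psi> \<longleftrightarrow> continuous_map X Y \<psi> \<and>
     (\<forall>U. openin Y U \<longrightarrow> (\<forall>f\<in>G U. f \<circ> \<psi> \<in> F {x \<in> topspace X. \<psi> x \<in> U}))"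

text \<open>A derivation is represented by a function on
pairs (U,f) with U open, p in U, f in F U, which depends only on the germ of f at p;
it is normalised to 0 on all other pairs.\<close>
definition germ_rep :: "pt topology \<Rightarrow> sheaf \<Rightarrow> pt \<Rightarrow> pt set \<times> (pt \<Rightarrow> complex) \<Rightarrow> bool" where
  "germ_rep X F p Uf \<longleftrightarrow> openin X (fst Uf) \<and> p \<in> fst Uf \<and> snd Uf \<in> F (fst Uf)"

definition derivation :: "complex set \<Rightarrow> pt topology \<Rightarrow> sheaf \<Rightarrow> pt
      \<Rightarrow> (pt set \<times> (pt \<Rightarrow> complex) \<Rightarrow> complex) \<Rightarrow> bool" where
  "derivation K X F p t \<longleftrightarrow>
     (\<forall>Uf. \<not> germ_rep X F p Uf \<longrightarrow> t Uf = 0)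
   \<and> (\<forall>U f. germ_rep X F p (U, f) \<longrightarrow> t (U, f) \<in> K)
   \<and> (\<forall>U f U' g. germ_rep X F p (U, f) \<and> germ_rep X F p (U', g) \<and>
        (\<exists>W. openin X W \<and> p \<in> W \<and> W \<subseteq> U \<inter> U' \<and> (\<forall>x\<in>W. f x = g x))
        \<longrightarrow> t (U, f) = t (U', g))
   \<and> (\<forall>U f U' g. germ_rep X F p (U, f) \<and> germ_rep X F p (U', g) \<longrightarrow>
        t (U \<inter> U', \<lambda>x. f x + g x) = t (U, f) + t (U', g)
      \<and> t (U \<inter> U', \<lambda>x. f x * g x) = f p * t (U', g) + g p * t (U, f))
   \<and> (\<forall>U f c. germ_rep X F p (U, f) \<and> c \<in> K \<longrightarrow> t (U, \<lambda>x. c * f x) = c * t (U, f))"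

text \<open>A family of Taylor sheaves over K: for each n a topology T n and a sheaf S n on K^n.
The sheaf on K^n \<oplus> K^n is that of K^(2n) via join.\<close>
definition taylor_family :: "complex set \<Rightarrow> (nat \<Rightarrow> pt topology) \<Rightarrow> (nat \<Rightarrow> sheaf) \<Rightarrow> bool" where
  "taylor_family K T S \<longleftrightarrow>
   (\<forall>n. topspace (T n) = kvec K n \<and> sheaf_space K (T n) (S n) \<and> local_sheaf (T n) (S n)
    \<comment> \<open>(1) weakest topology making all global functions continuous\<close>
    \<and> (\<forall>f\<in>S n (kvec K n). continuous_map (T n) (top_of_set K) f)
    \<and> (\<forall>X'. topspace X' = kvec K n \<and>
           (\<forall>f\<in>S n (kvec K n). continuous_map X' (top_of_set K) f)
           \<longrightarrow> (\<forall>U. openin (T n) U \<longrightarrow> openin X' U))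
    \<comment> \<open>(2)\<close>
    \<and> kdual K n \<subseteq> S n (kvec K n)
    \<comment> \<open>(3)\<close>
    \<and> (\<forall>U m \<psi>. openin (T n) U \<and> \<psi> ` U \<subseteq> kvec K m \<longrightarrow>
         (smooth_map (subtopology (T n) U) (induced_sheaf (T n) (S n) U) (T m) (S m) \<psi>
          \<longleftrightarrow> (\<forall>\<phi>\<in>kdual K m. \<phi> \<circ> \<psi> \<in> S n U)))
    \<comment> \<open>(4)\<close>
    \<and> (\<forall>p\<in>kvec K n.
         (\<forall>\<phi>\<in>kdual K n. in_msq (T n) (S n) p (\<lambda>x. \<phi> x - \<phi> p) \<longrightarrow> (\<forall>x\<in>kvec K n. \<phi> x = 0))
       \<and> (\<forall>U f. openin (T n) U \<and> p \<in> U \<and> f \<in> S n U \<and> f p = 0 \<longrightarrow>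
            (\<exists>\<phi>\<in>kdual K n. in_msq (T n) (S n) p (\<lambda>x. f x - (\<phi> x - \<phi> p)))))
    \<comment> \<open>(5) (p,v) \<mapsto> df_p(v) lies in the sheaf of K^n \<oplus> K^n on U \<times> K^n\<close>
    \<and> (\<forall>U f. openin (T n) U \<and> f \<in> S n U \<longrightarrow>
         (\<exists>D \<in> S (2 * n) ((\<lambda>(p, v). join n p v) ` (U \<times> kvec K n)).
            \<forall>p\<in>U. \<forall>\<phi>\<in>kdual K n.
              in_msq (T n) (S n) p (\<lambda>x. f x - f p - (\<phi> x - \<phi> p)) \<longrightarrow>
              (\<forall>v\<in>kvec K n. D (join n p v) = \<phi> v))))"

text \<open>Tangent bundle of M \<subseteq> K^n (with induced structure), as a subset of
K^n \<oplus> K^n = K^(2n): the point join n p v corresponds to the derivation t at p with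
\<phi>(v) = t(\<phi> restricted to M) for all \<phi> in the dual.\<close>
definition tangent_set :: "complex set \<Rightarrow> (nat \<Rightarrow> pt topology) \<Rightarrow> (nat \<Rightarrow> sheaf) \<Rightarrow> nat \<Rightarrow> pt set \<Rightarrow> pt set" where
  "tangent_set K T S n M = {join n p v | p v. p \<in> M \<and> v \<in> kvec K n \<and>
      (\<exists>t. derivation K (subtopology (T n) M) (induced_sheaf (T n) (S n) M) p t \<and>
           (\<forall>\<phi>\<in>kdual K n. \<phi> v = t (M, \<phi>)))}"

definition differential :: "complex set \<Rightarrow> (nat \<Rightarrow> pt topology) \<Rightarrow> (nat \<Rightarrow> sheaf)
      \<Rightarrow> nat \<Rightarrow> pt set \<Rightarrow> nat \<Rightarrow> (pt \<Rightarrow> pt) \<Rightarrow> pt \<Rightarrow> pt" where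
  "differential K T S n1 M1 n2 \<psi> z =
     (let p = fstp n1 z; v = sndp n1 z in
      join n2 (\<psi> p) (THE w. w \<in> kvec K n2 \<and>
        (\<exists>t. derivation K (subtopology (T n1) M1) (induced_sheaf (T n1) (S n1) M1) p t \<and>
             (\<forall>\<phi>\<in>kdual K n1. \<phi> v = t (M1, \<phi>)) \<and>
             (\<forall>\<phi>\<in>kdual K n2. \<phi> w = t (M1, \<phi> \<circ> \<psi>)))))"

end

theory Submission
  imports Defs
begin

text \<open>Locally on the tangent set, the differential is given by an explicit smooth formula.
Near a point of \<open>M\<^sub>1\<close> the coordinates of \<open>\<psi>\<close> agree on \<open>M\<^sub>1\<close> with functions \<open>g\<^sub>i\<close> of the
ambient sheaf on an open set \<open>W\<close>, and axiom (5) provides functions \<open>D\<^sub>i\<close> on \<open>W \<times> K\<^sup>n\<close> with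
\<open>D\<^sub>i(p, v) = (dg\<^sub>i)\<^sub>p(v)\<close>. A derivation \<open>t\<close> at \<open>p\<close> representing \<open>v\<close> kills \<open>m\<^sub>p\<^sup>2\<close>, so by (4)
\<open>t(g\<^sub>i) = (dg\<^sub>i)\<^sub>p(v) = D\<^sub>i(p, v)\<close>, and by linearity \<open>t(\<phi> \<circ> \<psi>) = \<phi>(D(p, v))\<close> for every linear
form \<open>\<phi>\<close>. Hence \<open>d\<psi>(p, v) = (g(p), D(p, v))\<close> on \<open>(W \<times> K\<^sup>n) \<inter> TM\<^sub>1\<close>, and this map has all its
coordinates in the sheaf of \<open>K\<^sup>n \<oplus> K\<^sup>n\<close>. A map between induced structures that locally agrees
with smooth maps defined on open sets is smooth.\<close>

section \<open>Sheaf spaces and induced structures\<close>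

lemma induced_sheaf_of_sheaf:
  "openin X W \<Longrightarrow> f \<in> F W \<Longrightarrow> U \<subseteq> W \<Longrightarrow> f \<in> induced_sheaf X F M U"
  unfolding induced_sheaf_def by blast

lemma induced_sheaf_cong:
  assumes f: "f \<in> induced_sheaf X F M U" and eq: "\<forall>x\<in>U. g x = f x"
  shows "g \<in> induced_sheaf X F M U"
  unfolding induced_sheaf_def
proof (intro CollectI ballI)
  fix p assume "p \<in> U"
  then obtain W h where "openin X W" "p \<in> W" "h \<in> F W" "\<forall>x\<in>U \<inter> W. f x = h x"
    using f unfolding induced_sheaf_def by blast
  then show "\<exists>W. openin X W \<and> p \<in> W \<and> (\<exists>h\<in>F W. \<forall>x\<in>U \<inter> W. g x = h x)"
    using eq by auto
qed

lemma induced_sheaf_mono: "f \<in> induced_sheaf X F M U \<Longrightarrow> V \<subseteq> U \<Longrightarrow> f \<in> induced_sheaf X F M V"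
  unfolding induced_sheaf_def by blast

context
  fixes K :: "complex set" and X :: "pt topology" and F :: sheaf
  assumes sheaf: "sheaf_space K X F"
begin

lemma sheaf_space_parts:
  assumes "openin X U"
  shows "\<forall>f\<in>F U. \<forall>x\<in>U. f x \<in> K"
    and "\<forall>c\<in>K. (\<lambda>_. c) \<in> F U"
    and "\<forall>f\<in>F U. \<forall>g\<in>F U. (\<lambda>x. f x + g x) \<in> F U \<and> (\<lambda>x. f x * g x) \<in> F U"
    and "\<forall>f\<in>F U. \<forall>g. (\<forall>x\<in>U. g x = f x) \<longrightarrow> g \<in> F U"
    and "\<forall>W. openin X W \<and> W \<subseteq> U \<longrightarrow> F U \<subseteq> F W"
    and "\<forall>g. (\<forall>x\<in>U. \<exists>W. openin X W \<and> x \<in> W \<and> W \<subseteq> U \<and> g \<in> F W) \<longrightarrow> g \<in> F U"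
  using sheaf assms unfolding sheaf_space_def by simp_all

lemma sheaf_space_values: "openin X U \<Longrightarrow> f \<in> F U \<Longrightarrow> x \<in> U \<Longrightarrow> f x \<in> K"
  using sheaf_space_parts(1) by blast

lemma sheaf_space_const: "openin X U \<Longrightarrow> c \<in> K \<Longrightarrow> (\<lambda>_. c) \<in> F U"
  using sheaf_space_parts(2) by blast

lemma sheaf_space_add: "openin X U \<Longrightarrow> f \<in> F U \<Longrightarrow> g \<in> F U \<Longrightarrow> (\<lambda>x. f x + g x) \<in> F U"
  using sheaf_space_parts(3) by blast

lemma sheaf_space_mult: "openin X U \<Longrightarrow> f \<in> F U \<Longrightarrow> g \<in> F U \<Longrightarrow> (\<lambda>x. f x * g x) \<in> F U"
  using sheaf_space_parts(3) by blast

lemma sheaf_space_cong: "openin X U \<Longrightarrow> f \<in> F U \<Longrightarrow> (\<And>x. x \<in> U \<Longrightarrow> g x = f x) \<Longrightarrow> g \<in> F U"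
  using sheaf_space_parts(4) by blast

lemma sheaf_space_restrict: "openin X U \<Longrightarrow> openin X W \<Longrightarrow> W \<subseteq> U \<Longrightarrow> f \<in> F U \<Longrightarrow> f \<in> F W"
  using sheaf_space_parts(5) by blast

lemma sheaf_space_glue:
  "openin X U \<Longrightarrow> (\<And>x. x \<in> U \<Longrightarrow> \<exists>W. openin X W \<and> x \<in> W \<and> W \<subseteq> U \<and> g \<in> F W) \<Longrightarrow> g \<in> F U"
  using sheaf_space_parts(6) by blast

lemma sheaf_space_cmult: "openin X U \<Longrightarrow> c \<in> K \<Longrightarrow> f \<in> F U \<Longrightarrow> (\<lambda>x. c * f x) \<in> F U"
  using sheaf_space_mult[of U "\<lambda>_. c" f] sheaf_space_const by auto

lemma sheaf_space_diff:
  "-1 \<in> K \<Longrightarrow> openin X U \<Longrightarrow> f \<in> F U \<Longrightarrow> g \<in> F U \<Longrightarrow> (\<lambda>x. f x - g x) \<in> F U"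
  using sheaf_space_add[of U f "\<lambda>x. -1 * g x"] sheaf_space_cmult[of U "-1" g] by simp

lemma sheaf_space_sum:
  "0 \<in> K \<Longrightarrow> openin X U \<Longrightarrow> (\<And>j. j < (m::nat) \<Longrightarrow> h j \<in> F U) \<Longrightarrow>
    (\<lambda>x. \<Sum>j<m. h j x) \<in> F U"
proof (induction m)
  case 0 then show ?case using sheaf_space_const[of U 0] by simp
next
  case (Suc m) then show ?case using sheaf_space_add[of U "\<lambda>x. \<Sum>j<m. h j x" "h m"] by simp
qed

lemma germ_rep_add_mult:
  assumes "germ_rep X F p (U, f)" "germ_rep X F p (U', g)"
  shows "germ_rep X F p (U \<inter> U', \<lambda>x. f x + g x)" "germ_rep X F p (U \<inter> U', \<lambda>x. f x * g x)"
proof -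
  have U: "openin X U" "openin X U'" "f \<in> F U" "g \<in> F U'" "p \<in> U \<inter> U'"
    using assms unfolding germ_rep_def by simp_all
  then have UU': "openin X (U \<inter> U')" by blast
  have "f \<in> F (U \<inter> U')" "g \<in> F (U \<inter> U')"
    using sheaf_space_restrict[OF U(1) UU'] sheaf_space_restrict[OF U(2) UU'] U(3,4) by blast+
  then show "germ_rep X F p (U \<inter> U', \<lambda>x. f x + g x)" "germ_rep X F p (U \<inter> U', \<lambda>x. f x * g x)"
    unfolding germ_rep_def using UU' U(5) sheaf_space_add[OF UU'] sheaf_space_mult[OF UU'] by simp_all
qed

lemma germ_rep_cmult: "germ_rep X F p (U, f) \<Longrightarrow> c \<in> K \<Longrightarrow> germ_rep X F p (U, \<lambda>x. c * f x)"
  unfolding germ_rep_def using sheaf_space_cmult by simp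

lemma induced_sheaf_binop:
  assumes op: "\<And>U f g. openin X U \<Longrightarrow> f \<in> F U \<Longrightarrow> g \<in> F U \<Longrightarrow> (\<lambda>x. h (f x) (g x)) \<in> F U"
    and f: "f \<in> induced_sheaf X F M U" and g: "g \<in> induced_sheaf X F M U'"
  shows "(\<lambda>x. h (f x) (g x)) \<in> induced_sheaf X F M (U \<inter> U')"
  unfolding induced_sheaf_def
proof (intro CollectI ballI)
  fix p assume p: "p \<in> U \<inter> U'"
  obtain W1 g1 where 1: "openin X W1" "p \<in> W1" "g1 \<in> F W1" "\<forall>x\<in>U \<inter> W1. f x = g1 x"
    using f p unfolding induced_sheaf_def by blast
  obtain W2 g2 where 2: "openin X W2" "p \<in> W2" "g2 \<in> F W2" "\<forall>x\<in>U' \<inter> W2. g x = g2 x"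
    using g p unfolding induced_sheaf_def by blast
  have W: "openin X (W1 \<inter> W2)" using 1 2 by auto
  then have "(\<lambda>x. h (g1 x) (g2 x)) \<in> F (W1 \<inter> W2)"
    using op sheaf_space_restrict 1 2 by (meson inf_le1 inf_le2)
  then show "\<exists>W. openin X W \<and> p \<in> W \<and> (\<exists>k\<in>F W. \<forall>x\<in>U \<inter> U' \<inter> W. h (f x) (g x) = k x)"
    using W 1 2 by (intro exI[of _ "W1 \<inter> W2"]) auto
qed

lemma induced_sheaf_add:
  "f \<in> induced_sheaf X F M U \<Longrightarrow> g \<in> induced_sheaf X F M U' \<Longrightarrow>
    (\<lambda>x. f x + g x) \<in> induced_sheaf X F M (U \<inter> U')"
  using induced_sheaf_binop[of "(+)"] sheaf_space_add by blast

lemma induced_sheaf_mult: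
  "f \<in> induced_sheaf X F M U \<Longrightarrow> g \<in> induced_sheaf X F M U' \<Longrightarrow>
    (\<lambda>x. f x * g x) \<in> induced_sheaf X F M (U \<inter> U')"
  using induced_sheaf_binop[of "(*)"] sheaf_space_mult by blast

lemma induced_sheaf_open_subset:
  assumes U: "openin X U" and f: "f \<in> induced_sheaf X F M U"
  shows "f \<in> F U"
proof (rule sheaf_space_glue[OF U])
  fix x assume x: "x \<in> U"
  obtain W g where W: "openin X W" "x \<in> W" "g \<in> F W" "\<forall>y\<in>U \<inter> W. f y = g y"
    using f x unfolding induced_sheaf_def by blast
  have UW: "openin X (U \<inter> W)" using U W by auto
  then have "f \<in> F (U \<inter> W)"
    using sheaf_space_cong sheaf_space_restrict W by (metis IntD2 inf_le2)
  then show "\<exists>W. openin X W \<and> x \<in> W \<and> W \<subseteq> U \<and> f \<in> F W" using UW x W by blast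
qed

lemma induced_sheaf_glue:
  assumes U: "openin (subtopology X M) U"
    and loc: "\<And>x. x \<in> U \<Longrightarrow> \<exists>W. openin (subtopology X M) W \<and> x \<in> W \<and> W \<subseteq> U \<and> g \<in> induced_sheaf X F M W"
  shows "g \<in> induced_sheaf X F M U"
  unfolding induced_sheaf_def
proof (intro CollectI ballI)
  fix x assume x: "x \<in> U"
  obtain W where W: "openin (subtopology X M) W" "x \<in> W" "W \<subseteq> U" "g \<in> induced_sheaf X F M W"
    using loc[OF x] by blast
  obtain A where A: "openin X A" "W = A \<inter> M" using W(1) by (meson openin_subtopology)
  obtain V h where V: "openin X V" "x \<in> V" "h \<in> F V" "\<forall>y\<in>W \<inter> V. g y = h y"
    using W(2,4) unfolding induced_sheaf_def by blast
  have AV: "openin X (A \<inter> V)" using openin_Int[OF A(1) V(1)] .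
  moreover have "x \<in> A \<inter> V" using A(2) W(2) V(2) by blast
  moreover have "h \<in> F (A \<inter> V)" using sheaf_space_restrict[OF V(1) AV _ V(3)] by blast
  moreover have "U \<subseteq> M" using openin_subset[OF U] by simp
  then have "\<forall>y\<in>U \<inter> (A \<inter> V). g y = h y" using V(4) A(2) by blast
  ultimately show "\<exists>V. openin X V \<and> x \<in> V \<and> (\<exists>h\<in>F V. \<forall>y\<in>U \<inter> V. g y = h y)"
    by blast
qed

lemma sheaf_space_induced_sheaf: "sheaf_space K (subtopology X M) (induced_sheaf X F M)"
  unfolding sheaf_space_def
proof (intro allI impI conjI ballI)
  fix U assume U: "openin (subtopology X M) U"
  show "f x \<in> K" if f: "f \<in> induced_sheaf X F M U" and x: "x \<in> U" for f x
  proof -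
    obtain W g where "openin X W" "x \<in> W" "g \<in> F W" "\<forall>y\<in>U \<inter> W. f y = g y"
      using f x unfolding induced_sheaf_def by blast
    then show ?thesis using x sheaf_space_values[of W g x] by simp
  qed
  show "(\<lambda>_. c) \<in> induced_sheaf X F M U" if "c \<in> K" for c
  proof (rule induced_sheaf_of_sheaf)
    show "(\<lambda>_. c) \<in> F (topspace X)" using sheaf_space_const[OF openin_topspace that] .
    show "U \<subseteq> topspace X" using openin_subset[OF U] by simp
  qed simp
  show "(\<lambda>x. f x + g x) \<in> induced_sheaf X F M U" "(\<lambda>x. f x * g x) \<in> induced_sheaf X F M U"
    if "f \<in> induced_sheaf X F M U" "g \<in> induced_sheaf X F M U" for f g
    using induced_sheaf_add[OF that] induced_sheaf_mult[OF that] by simp_all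
  show "g \<in> induced_sheaf X F M U" if "f \<in> induced_sheaf X F M U" "\<forall>x\<in>U. g x = f x" for f g
    using induced_sheaf_cong that by blast
  show "induced_sheaf X F M U \<subseteq> induced_sheaf X F M W"
    if "openin (subtopology X M) W \<and> W \<subseteq> U" for W
    using that induced_sheaf_mono by blast
  show "g \<in> induced_sheaf X F M U"
    if "\<forall>x\<in>U. \<exists>W. openin (subtopology X M) W \<and> x \<in> W \<and> W \<subseteq> U \<and> g \<in> induced_sheaf X F M W"
    for g
    using induced_sheaf_glue[OF U] that by blast
qed

end

section \<open>Derivations\<close>

context
  fixes K :: "complex set" and Y :: "pt topology" and G :: sheaf and p :: pt and t
  assumes der: "derivation K Y G p t"
begin

lemma derivation_parts:
  "\<And>U f. germ_rep Y G p (U, f) \<Longrightarrow> t (U, f) \<in> K"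
  "\<And>U f U' g. germ_rep Y G p (U, f) \<Longrightarrow> germ_rep Y G p (U', g) \<Longrightarrow>
     (\<exists>W. openin Y W \<and> p \<in> W \<and> W \<subseteq> U \<inter> U' \<and> (\<forall>x\<in>W. f x = g x)) \<Longrightarrow>
     t (U, f) = t (U', g)"
  "\<And>U f U' g. germ_rep Y G p (U, f) \<Longrightarrow> germ_rep Y G p (U', g) \<Longrightarrow>
     t (U \<inter> U', \<lambda>x. f x + g x) = t (U, f) + t (U', g)"
  "\<And>U f U' g. germ_rep Y G p (U, f) \<Longrightarrow> germ_rep Y G p (U', g) \<Longrightarrow>
     t (U \<inter> U', \<lambda>x. f x * g x) = f p * t (U', g) + g p * t (U, f)"
  "\<And>U f c. germ_rep Y G p (U, f) \<Longrightarrow> c \<in> K \<Longrightarrow> t (U, \<lambda>x. c * f x) = c * t (U, f)"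
  using der unfolding derivation_def by blast+

lemma derivation_in_field: "openin Y U \<Longrightarrow> p \<in> U \<Longrightarrow> f \<in> G U \<Longrightarrow> t (U, f) \<in> K"
  using derivation_parts(1) unfolding germ_rep_def by simp

lemma derivation_local:
  assumes "openin Y U" "p \<in> U" "f \<in> G U" "openin Y U'" "p \<in> U'" "g \<in> G U'"
    and "openin Y W" "p \<in> W" "W \<subseteq> U \<inter> U'" "\<forall>x\<in>W. f x = g x"
  shows "t (U, f) = t (U', g)"
  using derivation_parts(2)[of U f U' g] assms unfolding germ_rep_def by auto

lemma derivation_add:
  "openin Y U \<Longrightarrow> p \<in> U \<Longrightarrow> f \<in> G U \<Longrightarrow> openin Y U' \<Longrightarrow> p \<in> U' \<Longrightarrow> g \<in> G U' \<Longrightarrow>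
    t (U \<inter> U', \<lambda>x. f x + g x) = t (U, f) + t (U', g)"
  using derivation_parts(3)[of U f U' g] unfolding germ_rep_def by simp

lemma derivation_mult:
  "openin Y U \<Longrightarrow> p \<in> U \<Longrightarrow> f \<in> G U \<Longrightarrow> openin Y U' \<Longrightarrow> p \<in> U' \<Longrightarrow> g \<in> G U' \<Longrightarrow>
    t (U \<inter> U', \<lambda>x. f x * g x) = f p * t (U', g) + g p * t (U, f)"
  using derivation_parts(4)[of U f U' g] unfolding germ_rep_def by simp

lemma derivation_scale:
  "openin Y U \<Longrightarrow> p \<in> U \<Longrightarrow> f \<in> G U \<Longrightarrow> c \<in> K \<Longrightarrow> t (U, \<lambda>x. c * f x) = c * t (U, f)"
  using derivation_parts(5)[of U f c] unfolding germ_rep_def by simp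

lemma derivation_add_same:
  "openin Y U \<Longrightarrow> p \<in> U \<Longrightarrow> f \<in> G U \<Longrightarrow> g \<in> G U \<Longrightarrow>
    t (U, \<lambda>x. f x + g x) = t (U, f) + t (U, g)"
  using derivation_add[of U f U g] by simp

lemma derivation_product_vanishing:
  "openin Y U \<Longrightarrow> p \<in> U \<Longrightarrow> f \<in> G U \<Longrightarrow> g \<in> G U \<Longrightarrow> f p = 0 \<Longrightarrow> g p = 0 \<Longrightarrow>
    t (U, \<lambda>x. f x * g x) = 0"
  using derivation_mult[of U f U g] by simp

lemma derivation_const:
  assumes "openin Y U" "p \<in> U" "(\<lambda>_. 1) \<in> G U" "c \<in> K"
  shows "t (U, \<lambda>_. c) = 0"
proof -
  have "t (U, \<lambda>_. 1) = 0"
    using derivation_mult[of U "\<lambda>_. 1" U "\<lambda>_. 1"] assms by simp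
  then show ?thesis using derivation_scale[of U "\<lambda>_. 1" c] assms by simp
qed

lemma derivation_sum:
  assumes sheaf: "sheaf_space K Y G" and K: "0 \<in> K" "1 \<in> K" and U: "openin Y U" "p \<in> U"
  shows "(\<And>j. j < (m::nat) \<Longrightarrow> h j \<in> G U) \<Longrightarrow>
    t (U, \<lambda>x. \<Sum>j<m. h j x) = (\<Sum>j<m. t (U, h j))"
proof (induction m)
  case 0
  then show ?case
    using derivation_const[OF U sheaf_space_const[OF sheaf U(1) K(2)] K(1)] by simp
next
  case (Suc m)
  have "(\<lambda>x. \<Sum>j<m. h j x) \<in> G U" using sheaf_space_sum[OF sheaf K(1) U(1)] Suc.prems by simp
  then show ?case using Suc derivation_add_same[OF U, of "\<lambda>x. \<Sum>j<m. h j x" "h m"] by simp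
qed

end

text \<open>The derivation \<open>f \<mapsto> t(f \<circ> \<psi>)\<close>, normalised to \<open>0\<close> off germ representatives
as the definition of a derivation demands.\<close>

definition pushforward_derivation ::
    "pt topology \<Rightarrow> pt topology \<Rightarrow> sheaf \<Rightarrow> (pt \<Rightarrow> pt) \<Rightarrow> pt
      \<Rightarrow> (pt set \<times> (pt \<Rightarrow> complex) \<Rightarrow> complex) \<Rightarrow> pt set \<times> (pt \<Rightarrow> complex) \<Rightarrow> complex" where
  "pushforward_derivation X Y G \<psi> p t Uf =
     (if germ_rep Y G (\<psi> p) Uf then t ({x \<in> topspace X. \<psi> x \<in> fst Uf}, snd Uf \<circ> \<psi>) else 0)"

lemma germ_rep_pullback:
  assumes \<psi>: "smooth_map X F Y G \<psi>" and p: "p \<in> topspace X" and germ: "germ_rep Y G (\<psi> p) (U, f)"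
  shows "germ_rep X F p ({x \<in> topspace X. \<psi> x \<in> U}, f \<circ> \<psi>)"
proof -
  have U: "openin Y U" "\<psi> p \<in> U" "f \<in> G U" using germ unfolding germ_rep_def by simp_all
  have "continuous_map X Y \<psi>" using \<psi> unfolding smooth_map_def by simp
  then have "openin X {x \<in> topspace X. \<psi> x \<in> U}" by (rule openin_continuous_map_preimage[OF _ U(1)])
  moreover have "f \<circ> \<psi> \<in> F {x \<in> topspace X. \<psi> x \<in> U}" using \<psi> U unfolding smooth_map_def by blast
  ultimately show ?thesis unfolding germ_rep_def using p U(2) by simp
qed

lemma derivation_comp_local:
  assumes \<psi>: "smooth_map X F Y G \<psi>" and der: "derivation K X F p t" and p: "p \<in> topspace X"
    and germs: "germ_rep Y G (\<psi> p) (U, f)" "germ_rep Y G (\<psi> p) (U', g)"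
    and W: "openin Y W" "\<psi> p \<in> W" "W \<subseteq> U \<inter> U'" "\<forall>x\<in>W. f x = g x"
  shows "t ({x \<in> topspace X. \<psi> x \<in> U}, f \<circ> \<psi>) = t ({x \<in> topspace X. \<psi> x \<in> U'}, g \<circ> \<psi>)"
proof (rule derivation_parts(2)[OF der germ_rep_pullback[OF \<psi> p germs(1)] germ_rep_pullback[OF \<psi> p germs(2)]])
  have "continuous_map X Y \<psi>" using \<psi> unfolding smooth_map_def by simp
  then have "openin X {x \<in> topspace X. \<psi> x \<in> W}" by (rule openin_continuous_map_preimage[OF _ W(1)])
  then show "\<exists>V. openin X V \<and> p \<in> V \<and> V \<subseteq> {x \<in> topspace X. \<psi> x \<in> U} \<inter> {x \<in> topspace X. \<psi> x \<in> U'} \<and>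
      (\<forall>x\<in>V. (f \<circ> \<psi>) x = (g \<circ> \<psi>) x)"
    using p W by (intro exI[of _ "{x \<in> topspace X. \<psi> x \<in> W}"]) auto
qed

lemma derivation_pushforward:
  assumes sheaf: "sheaf_space K Y G" and \<psi>: "smooth_map X F Y G \<psi>"
    and der: "derivation K X F p t" and p: "p \<in> topspace X"
  shows "derivation K Y G (\<psi> p) (pushforward_derivation X Y G \<psi> p t)"
proof -
  define pre where "pre U = {x \<in> topspace X. \<psi> x \<in> U}" for U
  define t' where "t' = pushforward_derivation X Y G \<psi> p t"
  have germ: "germ_rep X F p (pre U, f \<circ> \<psi>)" if "germ_rep Y G (\<psi> p) (U, f)" for U f
    unfolding pre_def by (rule germ_rep_pullback[OF \<psi> p that])
  have t': "t' (U, f) = t (pre U, f \<circ> \<psi>)" if "germ_rep Y G (\<psi> p) (U, f)" for U f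
    using that unfolding t'_def pushforward_derivation_def pre_def by simp
  have pre_Int: "pre (U \<inter> U') = pre U \<inter> pre U'" for U U' unfolding pre_def by blast
  have "derivation K Y G (\<psi> p) t'"
    unfolding derivation_def
  proof (intro conjI allI impI)
    show "t' Uf = 0" if "\<not> germ_rep Y G (\<psi> p) Uf" for Uf
      using that unfolding t'_def pushforward_derivation_def by simp
    show "t' (U, f) \<in> K" if "germ_rep Y G (\<psi> p) (U, f)" for U f
      using that t' derivation_parts(1)[OF der germ] by simp
    show "t' (U, f) = t' (U', g)"
      if germs: "germ_rep Y G (\<psi> p) (U, f) \<and> germ_rep Y G (\<psi> p) (U', g) \<and>
          (\<exists>W. openin Y W \<and> \<psi> p \<in> W \<and> W \<subseteq> U \<inter> U' \<and> (\<forall>x\<in>W. f x = g x))" for U f U' g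
    proof -
      have fU: "germ_rep Y G (\<psi> p) (U, f)" and gU: "germ_rep Y G (\<psi> p) (U', g)"
        using germs by blast+
      obtain W where W: "openin Y W" "\<psi> p \<in> W" "W \<subseteq> U \<inter> U'" "\<forall>x\<in>W. f x = g x"
        using germs by blast
      show ?thesis
        using derivation_comp_local[OF \<psi> der p fU gU W] t'[OF fU] t'[OF gU] unfolding pre_def by simp
    qed
    show "t' (U \<inter> U', \<lambda>x. f x + g x) = t' (U, f) + t' (U', g)"
      and "t' (U \<inter> U', \<lambda>x. f x * g x) = f (\<psi> p) * t' (U', g) + g (\<psi> p) * t' (U, f)"
      if "germ_rep Y G (\<psi> p) (U, f) \<and> germ_rep Y G (\<psi> p) (U', g)" for U f U' g
      using that t' germ_rep_add_mult[OF sheaf, of "\<psi> p" U f U' g]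
        derivation_parts(3,4)[OF der germ germ, of U f U' g]
      by (simp_all add: pre_Int comp_def)
    show "t' (U, \<lambda>x. c * f x) = c * t' (U, f)" if "germ_rep Y G (\<psi> p) (U, f) \<and> c \<in> K" for U f c
      using that t' germ_rep_cmult[OF sheaf, of "\<psi> p" U f c] derivation_parts(5)[OF der germ, of U f c]
      by (simp add: comp_def)
  qed
  then show ?thesis unfolding t'_def .
qed

section \<open>Smoothness from local smooth extensions\<close>

lemma smooth_map_mem_subtopology: "smooth_map X F (subtopology Y B) G \<psi> \<Longrightarrow> x \<in> topspace X \<Longrightarrow> \<psi> x \<in> B"
  unfolding smooth_map_def continuous_map_def by auto

lemma smooth_map_on_open_pullback:
  assumes sheaf: "sheaf_space K X F" and V: "openin X V"
    and \<Phi>: "smooth_map (subtopology X V) (induced_sheaf X F V) Y G \<Phi>" and U: "openin Y U"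
  shows "openin X {x \<in> V. \<Phi> x \<in> U}" and "\<And>h. h \<in> G U \<Longrightarrow> h \<circ> \<Phi> \<in> F {x \<in> V. \<Phi> x \<in> U}"
proof -
  have top: "topspace (subtopology X V) = V" using openin_subset[OF V] by auto
  have "openin (subtopology X V) {x \<in> V. \<Phi> x \<in> U}"
    using openin_continuous_map_preimage[OF _ U] \<Phi> top unfolding smooth_map_def by fastforce
  then show pre: "openin X {x \<in> V. \<Phi> x \<in> U}" using openin_trans_full V by blast
  fix h assume "h \<in> G U"
  then have "h \<circ> \<Phi> \<in> induced_sheaf X F V {x \<in> topspace (subtopology X V). \<Phi> x \<in> U}"
    using \<Phi> U unfolding smooth_map_def by blast
  then have "h \<circ> \<Phi> \<in> induced_sheaf X F V {x \<in> V. \<Phi> x \<in> U}" unfolding top .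
  then show "h \<circ> \<Phi> \<in> F {x \<in> V. \<Phi> x \<in> U}" by (rule induced_sheaf_open_subset[OF sheaf pre])
qed

context
  fixes K :: "complex set" and X Y :: "pt topology" and F G :: sheaf and A B :: "pt set" and f :: "pt \<Rightarrow> pt"
  assumes sheaf: "sheaf_space K X F" and A: "A \<subseteq> topspace X"
    and ext: "\<And>z. z \<in> A \<Longrightarrow> \<exists>V \<Phi>. openin X V \<and> z \<in> V \<and>
        smooth_map (subtopology X V) (induced_sheaf X F V) Y G \<Phi> \<and> (\<forall>x\<in>A \<inter> V. f x = \<Phi> x \<and> \<Phi> x \<in> B)"
begin

lemma locally_extends_mapsto: "z \<in> A \<Longrightarrow> f z \<in> topspace Y \<inter> B"
proof -
  assume z: "z \<in> A"
  obtain V \<Phi> where V: "openin X V" "z \<in> V"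
    and \<Phi>: "smooth_map (subtopology X V) (induced_sheaf X F V) Y G \<Phi>"
    and agree: "\<forall>x\<in>A \<inter> V. f x = \<Phi> x \<and> \<Phi> x \<in> B"
    using ext[OF z] by blast
  have "\<Phi> z \<in> topspace Y"
    using \<Phi> V openin_subset[OF V(1)] unfolding smooth_map_def continuous_map_def by auto
  then show ?thesis using agree z V by auto
qed

lemma locally_extends_nbhd:
  assumes z: "z \<in> A" "f z \<in> U" and U: "openin Y U"
  shows "\<exists>N. openin X N \<and> z \<in> N \<and> (\<forall>x\<in>A \<inter> N. f x \<in> U) \<and>
      (\<forall>h\<in>G U. \<exists>k\<in>F N. \<forall>x\<in>A \<inter> N. h (f x) = k x)"
proof -
  obtain V \<Phi> where V: "openin X V" "z \<in> V"
    and \<Phi>: "smooth_map (subtopology X V) (induced_sheaf X F V) Y G \<Phi>"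
    and agree: "\<forall>x\<in>A \<inter> V. f x = \<Phi> x \<and> \<Phi> x \<in> B"
    using ext[OF z(1)] by blast
  show ?thesis
  proof (intro exI conjI ballI)
    show "openin X {x \<in> V. \<Phi> x \<in> U}" by (rule smooth_map_on_open_pullback(1)[OF sheaf V(1) \<Phi> U])
    show "z \<in> {x \<in> V. \<Phi> x \<in> U}" using z V agree by auto
    show "f x \<in> U" if "x \<in> A \<inter> {x \<in> V. \<Phi> x \<in> U}" for x using that agree by auto
    show "\<exists>k\<in>F {x \<in> V. \<Phi> x \<in> U}. \<forall>x\<in>A \<inter> {x \<in> V. \<Phi> x \<in> U}. h (f x) = k x" if "h \<in> G U" for h
      using smooth_map_on_open_pullback(2)[OF sheaf V(1) \<Phi> U that] agree
      by (intro bexI[of _ "h \<circ> \<Phi>"]) auto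
  qed
qed

lemma continuous_map_if_locally_extends: "continuous_map (subtopology X A) (subtopology Y B) f"
  unfolding continuous_map_def
proof (intro conjI allI impI)
  show "f \<in> topspace (subtopology X A) \<rightarrow> topspace (subtopology Y B)"
    using locally_extends_mapsto A by auto
  fix U' assume "openin (subtopology Y B) U'"
  then obtain U where U: "openin Y U" "U' = U \<inter> B" by (meson openin_subtopology)
  have "{x \<in> topspace (subtopology X A). f x \<in> U'} = {x \<in> A. f x \<in> U'}" using A by auto
  moreover have "openin (subtopology X A) {x \<in> A. f x \<in> U'}"
  proof (subst openin_subopen, intro ballI)
    fix z assume z: "z \<in> {x \<in> A. f x \<in> U'}"
    then obtain N where "openin X N" "z \<in> N" "\<forall>x\<in>A \<inter> N. f x \<in> U"
      using locally_extends_nbhd[of z U] U by blast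
    then show "\<exists>T. openin (subtopology X A) T \<and> z \<in> T \<and> T \<subseteq> {x \<in> A. f x \<in> U'}"
      using openin_subtopology_Int[of X N A] locally_extends_mapsto U z
      by (intro exI[of _ "N \<inter> A"]) auto
  qed
  ultimately show "openin (subtopology X A) {x \<in> topspace (subtopology X A). f x \<in> U'}" by simp
qed

lemma smooth_map_induced_if_locally_extends:
  "smooth_map (subtopology X A) (induced_sheaf X F A) (subtopology Y B) (induced_sheaf Y G B) f"
  unfolding smooth_map_def
proof (intro conjI allI impI ballI continuous_map_if_locally_extends)
  fix U h
  assume U: "openin (subtopology Y B) U" and h: "h \<in> induced_sheaf Y G B U"
  have "{x \<in> topspace (subtopology X A). f x \<in> U} = {x \<in> A. f x \<in> U}" using A by auto
  moreover have "h \<circ> f \<in> induced_sheaf X F A {x \<in> A. f x \<in> U}"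
    unfolding induced_sheaf_def
  proof (intro CollectI ballI)
    fix z assume z: "z \<in> {x \<in> A. f x \<in> U}"
    then obtain V k where V: "openin Y V" "f z \<in> V" "k \<in> G V" "\<forall>y\<in>U \<inter> V. h y = k y"
      using h unfolding induced_sheaf_def by blast
    obtain N where N: "openin X N" "z \<in> N" "\<forall>x\<in>A \<inter> N. f x \<in> V"
      and pull: "\<forall>h\<in>G V. \<exists>k\<in>F N. \<forall>x\<in>A \<inter> N. h (f x) = k x"
      using locally_extends_nbhd[of z V] z V by blast
    obtain k' where "k' \<in> F N" "\<forall>x\<in>A \<inter> N. k (f x) = k' x" using pull V(3) by blast
    then show "\<exists>W. openin X W \<and> z \<in> W \<and> (\<exists>g\<in>F W. \<forall>x\<in>{x \<in> A. f x \<in> U} \<inter> W. (h \<circ> f) x = g x)"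
      using N V(4) by (intro exI[of _ N]) auto
  qed
  ultimately show "h \<circ> f \<in> induced_sheaf X F A {x \<in> topspace (subtopology X A). f x \<in> U}" by simp
qed

end

section \<open>Linear algebra on \<open>K\<^sup>n\<close>\<close>

definition basis_pt :: "nat \<Rightarrow> pt" where
  "basis_pt i = (\<lambda>j. if j = i then 1 else 0)"

locale scalar_field =
  fixes K :: "complex set"
  assumes real_or_complex: "K = \<real> \<or> K = UNIV"
begin

lemma scalars_closed: "0 \<in> K" "1 \<in> K" "-1 \<in> K" "a \<in> K \<Longrightarrow> b \<in> K \<Longrightarrow> a - b \<in> K"
  using real_or_complex by auto

lemma coordinate_in_kdual: "i < n \<Longrightarrow> (\<lambda>x. x i) \<in> kdual K n"
  unfolding kdual_def kvec_def by auto

lemma basis_pt_in_kvec: "i < n \<Longrightarrow> basis_pt i \<in> kvec K n"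
  using scalars_closed unfolding basis_pt_def kvec_def by auto

lemma kdual_expansion:
  assumes \<phi>: "\<phi> \<in> kdual K n" and x: "x \<in> kvec K n"
  shows "\<phi> x = (\<Sum>i<n. x i * \<phi> (basis_pt i))"
proof -
  have add: "\<phi> (\<lambda>i. a i + b i) = \<phi> a + \<phi> b" if "a \<in> kvec K n" "b \<in> kvec K n" for a b
    using \<phi> that unfolding kdual_def by blast
  have scale: "\<phi> (\<lambda>i. c * a i) = c * \<phi> a" if "c \<in> K" "a \<in> kvec K n" for c a
    using \<phi> that unfolding kdual_def by blast
  define trunc where "trunc k = (\<lambda>j. if j < k then x j else 0)" for k
  have trunc_kvec: "trunc k \<in> kvec K n" for k
    using x scalars_closed unfolding trunc_def kvec_def by auto
  have "\<phi> (trunc k) = (\<Sum>i<k. x i * \<phi> (basis_pt i))" if "k \<le> n" for k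
    using that
  proof (induction k)
    case 0
    have "trunc 0 = (\<lambda>i. trunc 0 i + trunc 0 i)" unfolding trunc_def by simp
    then have "\<phi> (trunc 0) = \<phi> (trunc 0) + \<phi> (trunc 0)" using add[OF trunc_kvec trunc_kvec] by metis
    then show ?case by simp
  next
    case (Suc k)
    have xk: "x k \<in> K" using x Suc.prems unfolding kvec_def by auto
    have e: "(\<lambda>i. x k * basis_pt k i) \<in> kvec K n"
      using Suc.prems xk scalars_closed unfolding kvec_def basis_pt_def by auto
    have "trunc (Suc k) = (\<lambda>i. trunc k i + x k * basis_pt k i)"
      unfolding trunc_def basis_pt_def by (auto simp: less_Suc_eq)
    then have "\<phi> (trunc (Suc k)) = \<phi> (trunc k) + \<phi> (\<lambda>i. x k * basis_pt k i)"
      using add[OF trunc_kvec e] by simp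
    also have "\<phi> (\<lambda>i. x k * basis_pt k i) = x k * \<phi> (basis_pt k)"
      using scale[OF xk basis_pt_in_kvec] Suc.prems by simp
    finally show ?case using Suc by simp
  qed
  moreover have "trunc n = x" using x unfolding trunc_def kvec_def by auto
  ultimately show ?thesis by auto
qed

lemma kvec_eqI:
  assumes "w \<in> kvec K n" "w' \<in> kvec K n" "\<And>\<phi>. \<phi> \<in> kdual K n \<Longrightarrow> \<phi> w = \<phi> w'"
  shows "w = w'"
proof
  fix i show "w i = w' i"
    using assms coordinate_in_kdual[of i n] unfolding kvec_def by (cases "i < n") auto
qed

lemma fstp_join: "p \<in> kvec K n \<Longrightarrow> fstp n (join n p v) = p"
  unfolding fstp_def join_def kvec_def by auto

lemma sndp_join: "v \<in> kvec K n \<Longrightarrow> sndp n (join n p v) = v"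
  unfolding sndp_def join_def kvec_def by auto

lemma join_in_kvec: "p \<in> kvec K n \<Longrightarrow> v \<in> kvec K n \<Longrightarrow> join n p v \<in> kvec K (2 * n)"
  unfolding join_def kvec_def by auto

lemma fstp_in_kvec: "z \<in> kvec K (2 * n) \<Longrightarrow> fstp n z \<in> kvec K n"
  using scalars_closed unfolding fstp_def kvec_def by auto

lemma sndp_in_kvec: "z \<in> kvec K (2 * n) \<Longrightarrow> sndp n z \<in> kvec K n"
  using scalars_closed unfolding sndp_def kvec_def by auto

lemma join_fstp_sndp: "z \<in> kvec K (2 * n) \<Longrightarrow> join n (fstp n z) (sndp n z) = z"
  unfolding join_def fstp_def sndp_def kvec_def by auto

lemma kdual_comp_fstp:
  assumes "\<phi> \<in> kdual K n"
  shows "\<phi> \<circ> fstp n \<in> kdual K (2 * n)"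
proof -
  have "fstp n (\<lambda>i. x i + y i) = (\<lambda>i. fstp n x i + fstp n y i)"
    and "fstp n (\<lambda>i. c * x i) = (\<lambda>i. c * fstp n x i)" for x y c
    unfolding fstp_def by auto
  then show ?thesis using assms fstp_in_kvec unfolding kdual_def by auto
qed

definition tube :: "nat \<Rightarrow> pt set \<Rightarrow> pt set" where
  "tube n W = {z \<in> kvec K (2 * n). fstp n z \<in> W}"

lemma tube_eq_image:
  assumes "W \<subseteq> kvec K n"
  shows "tube n W = (\<lambda>(p, v). join n p v) ` (W \<times> kvec K n)"
proof
  show "tube n W \<subseteq> (\<lambda>(p, v). join n p v) ` (W \<times> kvec K n)"
  proof
    fix z assume "z \<in> tube n W"
    then have "z = join n (fstp n z) (sndp n z)" "fstp n z \<in> W" "sndp n z \<in> kvec K n"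
      unfolding tube_def using join_fstp_sndp sndp_in_kvec by auto
    then show "z \<in> (\<lambda>(p, v). join n p v) ` (W \<times> kvec K n)" by (simp add: image_iff) blast
  qed
  show "(\<lambda>(p, v). join n p v) ` (W \<times> kvec K n) \<subseteq> tube n W"
    unfolding tube_def using assms join_in_kvec fstp_join by auto
qed

end

section \<open>Derivations and linear parts of functions\<close>

context scalar_field
begin

context
  fixes X :: "pt topology" and F :: sheaf
  assumes sheaf: "sheaf_space K X F"
begin

lemma derivation_vanishes_on_msq:
  assumes der: "derivation K (subtopology X M) (induced_sheaf X F M) p t"
    and U: "openin (subtopology X M) U" "p \<in> U"
    and g: "g \<in> induced_sheaf X F M U" and msq: "in_msq X F p g"
  shows "t (U, g) = 0"
proof -
  let ?X = "subtopology X M" and ?G = "induced_sheaf X F M"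
  have sheaf_G: "sheaf_space K ?X ?G" by (rule sheaf_space_induced_sheaf[OF sheaf])
  obtain W and m :: nat and a b where W: "openin X W" "p \<in> W"
    and ab: "\<forall>j<m. a j \<in> F W \<and> b j \<in> F W \<and> a j p = 0 \<and> b j p = 0"
    and g_eq: "\<forall>x\<in>W. g x = (\<Sum>j<m. a j x * b j x)"
    using msq unfolding in_msq_def by blast
  define U' where "U' = U \<inter> (M \<inter> W)"
  have U': "openin ?X U'" "p \<in> U'"
    unfolding U'_def using openin_Int[OF U(1) openin_subtopology_Int2[OF W(1)]] U(2) W(2)
      openin_subset[OF U(1)] by auto
  have ab_G: "a j \<in> ?G U'" "b j \<in> ?G U'" if "j < m" for j
    using ab that induced_sheaf_of_sheaf[OF W(1), of _ F U' M] unfolding U'_def by blast+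
  have "t (U', \<lambda>x. \<Sum>j<m. a j x * b j x) = (\<Sum>j<m. t (U', \<lambda>x. a j x * b j x))"
    by (rule derivation_sum[OF der sheaf_G scalars_closed(1,2) U'])
      (rule sheaf_space_mult[OF sheaf_G U'(1) ab_G])
  also have "\<dots> = 0"
    by (rule sum.neutral) (use derivation_product_vanishing[OF der U' ab_G] ab in blast)
  finally have "t (U', \<lambda>x. \<Sum>j<m. a j x * b j x) = 0" .
  moreover have "t (U, g) = t (U', \<lambda>x. \<Sum>j<m. a j x * b j x)"
  proof (rule derivation_local[OF der U g U'])
    show "(\<lambda>x. \<Sum>j<m. a j x * b j x) \<in> ?G U'"
      by (rule sheaf_space_sum[OF sheaf_G scalars_closed(1) U'(1)])
        (rule sheaf_space_mult[OF sheaf_G U'(1) ab_G])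
    show "\<forall>x\<in>U'. g x = (\<Sum>j<m. a j x * b j x)" using g_eq unfolding U'_def by blast
    show "U' \<subseteq> U \<inter> U'" unfolding U'_def by blast
  qed (rule U')+
  ultimately show ?thesis by simp
qed

lemma derivation_eq_on_linear_part:
  assumes der: "derivation K (subtopology X M) (induced_sheaf X F M) p t"
    and M: "M \<subseteq> topspace X" "p \<in> M"
    and W: "openin X W" "p \<in> W" and f: "f \<in> F W" and \<phi>: "\<phi> \<in> F (topspace X)"
    and msq: "in_msq X F p (\<lambda>x. f x - f p - (\<phi> x - \<phi> p))"
  shows "t (M \<inter> W, f) = t (M, \<phi>)"
proof -
  let ?X = "subtopology X M" and ?G = "induced_sheaf X F M"
  have sheaf_G: "sheaf_space K ?X ?G" by (rule sheaf_space_induced_sheaf[OF sheaf])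
  define U where "U = M \<inter> W"
  have U: "openin ?X U" "p \<in> U" unfolding U_def using openin_subtopology_Int2[OF W(1)] M W by auto
  have in_G: "h \<in> ?G U" if "h \<in> F W" for h
    using induced_sheaf_of_sheaf[of X W h F U M] W(1) that unfolding U_def by blast
  have \<phi>W: "\<phi> \<in> F W" by (rule sheaf_space_restrict[OF sheaf openin_topspace W(1) openin_subset[OF W(1)] \<phi>])
  have at_p: "f p \<in> K" "\<phi> p \<in> K" using sheaf_space_values[OF sheaf W(1)] W(2) f \<phi>W by blast+
  define c where "c = f p - \<phi> p"
  define r where "r x = f x - f p - (\<phi> x - \<phi> p)" for x
  have c: "c \<in> K" unfolding c_def using at_p scalars_closed(4) by blast
  have r: "r \<in> ?G U"
    unfolding r_def using at_p W(1) f \<phi>W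
    by (intro in_G sheaf_space_diff[OF sheaf scalars_closed(3)] sheaf_space_const[OF sheaf])
  have "f = (\<lambda>x. r x + (\<phi> x + c))" unfolding r_def c_def by auto
  then have "t (U, f) = t (U, r) + t (U, \<lambda>x. \<phi> x + c)"
    using derivation_add_same[OF der U r] sheaf_space_add[OF sheaf_G U(1)]
      in_G[OF \<phi>W] sheaf_space_const[OF sheaf_G U(1) c] by simp
  also have "t (U, r) = 0"
    using derivation_vanishes_on_msq[OF der U r] msq unfolding r_def by simp
  also have "t (U, \<lambda>x. \<phi> x + c) = t (U, \<phi>)"
    using derivation_add_same[OF der U in_G[OF \<phi>W] sheaf_space_const[OF sheaf_G U(1) c]]
      derivation_const[OF der U sheaf_space_const[OF sheaf_G U(1) scalars_closed(2)] c] by simp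
  also have "t (U, \<phi>) = t (M, \<phi>)"
  proof (rule derivation_local[OF der U in_G[OF \<phi>W]])
    show "openin ?X M" using M(1) by (simp add: openin_subtopology_refl)
    show "\<phi> \<in> ?G M" using induced_sheaf_of_sheaf[of X "topspace X" \<phi> F M M] \<phi> M(1) by simp
    show "U \<subseteq> U \<inter> M" unfolding U_def by blast
  qed (use U M in auto)
  finally show ?thesis unfolding U_def by simp
qed

end

end

section \<open>Taylor sheaves\<close>

definition chart_differential :: "nat \<Rightarrow> nat \<Rightarrow> (nat \<Rightarrow> pt \<Rightarrow> complex) \<Rightarrow> (nat \<Rightarrow> pt \<Rightarrow> complex) \<Rightarrow> pt \<Rightarrow> pt" where
  "chart_differential n1 n2 g D z =
     join n2 (\<lambda>i. if i < n2 then g i (fstp n1 z) else 0) (\<lambda>i. if i < n2 then D i z else 0)"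

locale taylor_sheaves = scalar_field K for K +
  fixes T :: "nat \<Rightarrow> pt topology" and S :: "nat \<Rightarrow> sheaf"
  assumes taylor: "taylor_family K T S"
begin

abbreviation tangent_derivation ::
    "nat \<Rightarrow> pt set \<Rightarrow> pt \<Rightarrow> pt \<Rightarrow> (pt set \<times> (pt \<Rightarrow> complex) \<Rightarrow> complex) \<Rightarrow> bool" where
  "tangent_derivation n M p v t \<equiv>
     derivation K (subtopology (T n) M) (induced_sheaf (T n) (S n) M) p t \<and> (\<forall>\<phi>\<in>kdual K n. \<phi> v = t (M, \<phi>))"

lemmas taylor_at = taylor[unfolded taylor_family_def, THEN spec]

lemma topspace_T: "topspace (T n) = kvec K n"
  using taylor_at[of n] by (elim conjE) assumption

lemma sheaf_space_T: "sheaf_space K (T n) (S n)"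
  using taylor_at[of n] by (elim conjE) assumption

lemma kdual_subset_S: "kdual K n \<subseteq> S n (kvec K n)"
  using taylor_at[of n] by (elim conjE) assumption

lemma smooth_map_into_kvecI:
  assumes "openin (T n) U" "\<psi> ` U \<subseteq> kvec K m" "\<And>\<phi>. \<phi> \<in> kdual K m \<Longrightarrow> \<phi> \<circ> \<psi> \<in> S n U"
  shows "smooth_map (subtopology (T n) U) (induced_sheaf (T n) (S n) U) (T m) (S m) \<psi>"
proof -
  have "\<forall>U m \<psi>. openin (T n) U \<and> \<psi> ` U \<subseteq> kvec K m \<longrightarrow>
      (smooth_map (subtopology (T n) U) (induced_sheaf (T n) (S n) U) (T m) (S m) \<psi>
        \<longleftrightarrow> (\<forall>\<phi>\<in>kdual K m. \<phi> \<circ> \<psi> \<in> S n U))"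
    using taylor_at[of n] by (elim conjE) assumption
  then show ?thesis using assms by blast
qed

lemma linear_part_exists:
  assumes "openin (T n) U" "p \<in> U" "f \<in> S n U" "f p = 0"
  shows "\<exists>\<phi>\<in>kdual K n. in_msq (T n) (S n) p (\<lambda>x. f x - (\<phi> x - \<phi> p))"
proof -
  have "\<forall>p\<in>kvec K n.
      (\<forall>\<phi>\<in>kdual K n. in_msq (T n) (S n) p (\<lambda>x. \<phi> x - \<phi> p) \<longrightarrow> (\<forall>x\<in>kvec K n. \<phi> x = 0))
    \<and> (\<forall>U f. openin (T n) U \<and> p \<in> U \<and> f \<in> S n U \<and> f p = 0 \<longrightarrow>
          (\<exists>\<phi>\<in>kdual K n. in_msq (T n) (S n) p (\<lambda>x. f x - (\<phi> x - \<phi> p))))"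
    using taylor_at[of n] by (elim conjE) assumption
  moreover have "p \<in> kvec K n" using assms(1,2) openin_subset topspace_T by blast
  ultimately show ?thesis using assms by blast
qed

lemma derivative_function_exists:
  assumes "openin (T n) U" "f \<in> S n U"
  shows "\<exists>D\<in>S (2 * n) ((\<lambda>(p, v). join n p v) ` (U \<times> kvec K n)). \<forall>p\<in>U. \<forall>\<phi>\<in>kdual K n.
    in_msq (T n) (S n) p (\<lambda>x. f x - f p - (\<phi> x - \<phi> p)) \<longrightarrow> (\<forall>v\<in>kvec K n. D (join n p v) = \<phi> v)"
proof -
  have "\<forall>U f. openin (T n) U \<and> f \<in> S n U \<longrightarrow>
      (\<exists>D\<in>S (2 * n) ((\<lambda>(p, v). join n p v) ` (U \<times> kvec K n)). \<forall>p\<in>U. \<forall>\<phi>\<in>kdual K n.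
        in_msq (T n) (S n) p (\<lambda>x. f x - f p - (\<phi> x - \<phi> p)) \<longrightarrow> (\<forall>v\<in>kvec K n. D (join n p v) = \<phi> v))"
    using taylor_at[of n] by (elim conjE) assumption
  then show ?thesis using assms by blast
qed

lemma openin_kvec: "openin (T n) (kvec K n)"
  using openin_topspace[of "T n"] topspace_T by simp

lemma openin_T_subset_kvec: "openin (T n) U \<Longrightarrow> U \<subseteq> kvec K n"
  using openin_subset topspace_T by blast

lemma kdual_in_S: "\<phi> \<in> kdual K n \<Longrightarrow> openin (T n) U \<Longrightarrow> \<phi> \<in> S n U"
  using sheaf_space_restrict[OF sheaf_space_T openin_kvec _ openin_T_subset_kvec] kdual_subset_S by blast

lemma derivation_eq_derivative_function:
  assumes M: "M \<subseteq> kvec K n" "p \<in> M" and v: "v \<in> kvec K n" and t: "tangent_derivation n M p v t"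
    and W: "openin (T n) W" "p \<in> W" and g: "g \<in> S n W"
    and D: "\<forall>\<phi>\<in>kdual K n. in_msq (T n) (S n) p (\<lambda>x. g x - g p - (\<phi> x - \<phi> p)) \<longrightarrow>
              (\<forall>v\<in>kvec K n. D (join n p v) = \<phi> v)"
  shows "t (M \<inter> W, g) = D (join n p v)"
proof -
  have "g p \<in> K" by (rule sheaf_space_values[OF sheaf_space_T W(1) g W(2)])
  then have "(\<lambda>x. g x - g p) \<in> S n W"
    using sheaf_space_diff[OF sheaf_space_T scalars_closed(3) W(1) g sheaf_space_const[OF sheaf_space_T W(1)]]
    by blast
  then obtain \<phi> where \<phi>: "\<phi> \<in> kdual K n"
    and msq: "in_msq (T n) (S n) p (\<lambda>x. g x - g p - (\<phi> x - \<phi> p))"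
    using linear_part_exists[OF W(1,2), of "\<lambda>x. g x - g p"] by auto
  have "t (M \<inter> W, g) = t (M, \<phi>)"
    using derivation_eq_on_linear_part[OF sheaf_space_T conjunct1[OF t] _ M(2) W g _ msq] M(1) \<phi> kdual_subset_S
    by (simp add: topspace_T subset_iff)
  also have "\<dots> = D (join n p v)" using t v \<phi> D msq by simp
  finally show ?thesis .
qed

lemma smooth_map_from_components:
  assumes U: "openin (T n) U" and maps: "\<And>z. z \<in> U \<Longrightarrow> \<Phi> z \<in> kvec K m"
    and components: "\<And>k. k < m \<Longrightarrow> (\<lambda>z. \<Phi> z k) \<in> S n U"
  shows "smooth_map (subtopology (T n) U) (induced_sheaf (T n) (S n) U) (T m) (S m) \<Phi>"
proof (rule smooth_map_into_kvecI[OF U])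
  show "\<Phi> ` U \<subseteq> kvec K m" using maps by blast
  fix \<phi> assume \<phi>: "\<phi> \<in> kdual K m"
  have "\<phi> (basis_pt k) \<in> K" if "k < m" for k
    using \<phi> basis_pt_in_kvec[OF that] unfolding kdual_def by blast
  then have "(\<lambda>z. \<Phi> z k * \<phi> (basis_pt k)) \<in> S n U" if "k < m" for k
    using sheaf_space_mult[OF sheaf_space_T U components sheaf_space_const[OF sheaf_space_T U]] that
    by blast
  then have "(\<lambda>z. \<Sum>k<m. \<Phi> z k * \<phi> (basis_pt k)) \<in> S n U"
    by (rule sheaf_space_sum[OF sheaf_space_T scalars_closed(1) U])
  then show "\<phi> \<circ> \<Phi> \<in> S n U"
    by (rule sheaf_space_cong[OF sheaf_space_T U]) (simp add: kdual_expansion[OF \<phi> maps])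
qed

lemma smooth_map_fstp:
  "smooth_map (subtopology (T (2 * n)) (kvec K (2 * n))) (induced_sheaf (T (2 * n)) (S (2 * n)) (kvec K (2 * n)))
     (T n) (S n) (fstp n)"
  by (rule smooth_map_into_kvecI[OF openin_kvec]) (use fstp_in_kvec kdual_comp_fstp kdual_subset_S in blast)+

lemma tube_pullback:
  assumes W: "openin (T n) W"
  shows "openin (T (2 * n)) (tube n W)"
    and "g \<in> S n W \<Longrightarrow> (\<lambda>z. g (fstp n z)) \<in> S (2 * n) (tube n W)"
  using smooth_map_on_open_pullback[OF sheaf_space_T openin_kvec smooth_map_fstp W]
  unfolding tube_def comp_def by blast+

lemma kdual_in_induced_sheaf: "\<phi> \<in> kdual K n \<Longrightarrow> M \<subseteq> kvec K n \<Longrightarrow> \<phi> \<in> induced_sheaf (T n) (S n) M M"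
  using induced_sheaf_of_sheaf[of "T n" "kvec K n" \<phi> "S n" M M] kdual_in_S openin_kvec by blast

section \<open>The differential\<close>

lemma tangent_setE:
  assumes "z \<in> tangent_set K T S n M"
  obtains p v t where "z = join n p v" "p \<in> M" "v \<in> kvec K n" "tangent_derivation n M p v t"
  using assms unfolding tangent_set_def by blast

lemma tangent_setI: "p \<in> M \<Longrightarrow> v \<in> kvec K n \<Longrightarrow> tangent_derivation n M p v t \<Longrightarrow> join n p v \<in> tangent_set K T S n M"
  unfolding tangent_set_def by blast

lemma tangent_set_subset_kvec: "M \<subseteq> kvec K n \<Longrightarrow> tangent_set K T S n M \<subseteq> kvec K (2 * n)"
  unfolding tangent_set_def using join_in_kvec by blast

lemma differential_eqI:
  assumes "p \<in> kvec K n1" "v \<in> kvec K n1" "tangent_derivation n1 M1 p v t" "w \<in> kvec K n2"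
    and push: "\<And>t. tangent_derivation n1 M1 p v t \<Longrightarrow> \<forall>\<phi>\<in>kdual K n2. \<phi> w = t (M1, \<phi> \<circ> \<psi>)"
  shows "differential K T S n1 M1 n2 \<psi> (join n1 p v) = join n2 (\<psi> p) w"
proof -
  have "(THE w. w \<in> kvec K n2 \<and>
        (\<exists>t. derivation K (subtopology (T n1) M1) (induced_sheaf (T n1) (S n1) M1) p t \<and>
             (\<forall>\<phi>\<in>kdual K n1. \<phi> v = t (M1, \<phi>)) \<and>
             (\<forall>\<phi>\<in>kdual K n2. \<phi> w = t (M1, \<phi> \<circ> \<psi>)))) = w"
  proof (rule the_equality)
    fix w' assume "w' \<in> kvec K n2 \<and>
        (\<exists>t. derivation K (subtopology (T n1) M1) (induced_sheaf (T n1) (S n1) M1) p t \<and>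
             (\<forall>\<phi>\<in>kdual K n1. \<phi> v = t (M1, \<phi>)) \<and>
             (\<forall>\<phi>\<in>kdual K n2. \<phi> w' = t (M1, \<phi> \<circ> \<psi>)))"
    then show "w' = w" using kvec_eqI[of w' n2 w] assms(4) push by metis
  qed (use assms push in blast)
  then show ?thesis unfolding differential_def Let_def fstp_join[OF assms(1)] sndp_join[OF assms(2)] by simp
qed

lemma smooth_map_chart_differential:
  assumes W: "openin (T n1) W" and g: "\<And>i. i < n2 \<Longrightarrow> g i \<in> S n1 W"
    and D: "\<And>i. i < n2 \<Longrightarrow> D i \<in> S (2 * n1) (tube n1 W)"
  shows "smooth_map (subtopology (T (2 * n1)) (tube n1 W)) (induced_sheaf (T (2 * n1)) (S (2 * n1)) (tube n1 W))
      (T (2 * n2)) (S (2 * n2)) (chart_differential n1 n2 g D)"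
proof (rule smooth_map_from_components[OF tube_pullback(1)[OF W]])
  fix z assume z: "z \<in> tube n1 W"
  have "fstp n1 z \<in> W" using z unfolding tube_def by blast
  then have "g i (fstp n1 z) \<in> K" "D i z \<in> K" if "i < n2" for i
    using sheaf_space_values[OF sheaf_space_T W g[OF that]]
      sheaf_space_values[OF sheaf_space_T tube_pullback(1)[OF W] D[OF that] z] by blast+
  then show "chart_differential n1 n2 g D z \<in> kvec K (2 * n2)"
    unfolding chart_differential_def by (intro join_in_kvec) (auto simp: kvec_def scalars_closed(1))
next
  fix k assume k: "k < 2 * n2"
  show "(\<lambda>z. chart_differential n1 n2 g D z k) \<in> S (2 * n1) (tube n1 W)"
  proof (cases "k < n2")
    case True
    then show ?thesis unfolding chart_differential_def join_def using tube_pullback(2)[OF W g[OF True]] by simp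
  next
    case False
    then have "k - n2 < n2" using k by simp
    then show ?thesis unfolding chart_differential_def join_def using D[of "k - n2"] False by simp
  qed
qed

context
  fixes n1 n2 :: nat and M1 M2 :: "pt set" and \<psi> :: "pt \<Rightarrow> pt"
  assumes M: "M1 \<subseteq> kvec K n1" "M2 \<subseteq> kvec K n2"
    and \<psi>: "smooth_map (subtopology (T n1) M1) (induced_sheaf (T n1) (S n1) M1)
                        (subtopology (T n2) M2) (induced_sheaf (T n2) (S n2) M2) \<psi>"
begin

lemma smooth_map_pullback_kdual:
  assumes \<phi>: "\<phi> \<in> kdual K n2"
  shows "\<phi> \<circ> \<psi> \<in> induced_sheaf (T n1) (S n1) M1 M1"
proof -
  have top: "topspace (subtopology (T n1) M1) = M1" using M(1) topspace_T by auto
  have "openin (subtopology (T n2) M2) M2" using M(2) by (simp add: openin_subtopology_refl topspace_T)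
  then have "\<phi> \<circ> \<psi> \<in> induced_sheaf (T n1) (S n1) M1 {x \<in> topspace (subtopology (T n1) M1). \<psi> x \<in> M2}"
    using \<psi> kdual_in_induced_sheaf[OF \<phi> M(2)] unfolding smooth_map_def by blast
  moreover have "{x \<in> topspace (subtopology (T n1) M1). \<psi> x \<in> M2} = M1"
    using smooth_map_mem_subtopology[OF \<psi>] top by blast
  ultimately show ?thesis by simp
qed

lemma smooth_map_local_coordinates:
  assumes p0: "p0 \<in> M1"
  obtains W g where "openin (T n1) W" "p0 \<in> W" "\<And>i. i < n2 \<Longrightarrow> g i \<in> S n1 W"
    "\<And>i x. i < n2 \<Longrightarrow> x \<in> M1 \<inter> W \<Longrightarrow> \<psi> x i = g i x"
proof -
  define chart where "chart i W h \<longleftrightarrow>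
    openin (T n1) W \<and> p0 \<in> W \<and> h \<in> S n1 W \<and> (\<forall>x\<in>M1 \<inter> W. \<psi> x i = h x)" for i W h
  have "\<exists>W h. chart i W h" if i: "i < n2" for i
  proof -
    have "(\<lambda>y. y i) \<circ> \<psi> \<in> induced_sheaf (T n1) (S n1) M1 M1"
      by (rule smooth_map_pullback_kdual[OF coordinate_in_kdual[OF i]])
    then obtain W h where "openin (T n1) W" "p0 \<in> W" "h \<in> S n1 W" "\<forall>x\<in>M1 \<inter> W. ((\<lambda>y. y i) \<circ> \<psi>) x = h x"
      using p0 unfolding induced_sheaf_def by blast
    then show ?thesis unfolding chart_def by auto
  qed
  then obtain Wf gf where charts: "\<And>i. i < n2 \<Longrightarrow> chart i (Wf i) (gf i)" by metis
  define W where "W = (\<Inter>i\<in>{..<n2}. Wf i) \<inter> topspace (T n1)"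
  have charts': "openin (T n1) (Wf i)" "p0 \<in> Wf i" "gf i \<in> S n1 (Wf i)"
      "\<And>x. x \<in> M1 \<inter> Wf i \<Longrightarrow> \<psi> x i = gf i x" if "i < n2" for i
    using charts[OF that] unfolding chart_def by blast+
  have W_sub: "W \<subseteq> Wf i" if "i < n2" for i unfolding W_def using that by blast
  have W: "openin (T n1) W" unfolding W_def using charts'(1) by (intro openin_INT) auto
  show thesis
  proof (rule that[OF W])
    show "p0 \<in> W" unfolding W_def using charts'(2) p0 M(1) topspace_T by auto
    show "gf i \<in> S n1 W" if "i < n2" for i
      by (rule sheaf_space_restrict[OF sheaf_space_T charts'(1)[OF that] W W_sub[OF that] charts'(3)[OF that]])
    show "\<psi> x i = gf i x" if "i < n2" "x \<in> M1 \<inter> W" for i x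
      using charts'(4)[OF that(1)] W_sub[OF that(1)] that(2) by blast
  qed
qed

lemma derivation_comp_in_coordinates:
  assumes W: "openin (T n1) W" and g: "\<And>i. i < n2 \<Longrightarrow> g i \<in> S n1 W"
    and coords: "\<And>i x. i < n2 \<Longrightarrow> x \<in> M1 \<inter> W \<Longrightarrow> \<psi> x i = g i x"
    and p: "p \<in> M1" "p \<in> W"
    and der: "derivation K (subtopology (T n1) M1) (induced_sheaf (T n1) (S n1) M1) p t"
    and \<phi>: "\<phi> \<in> kdual K n2"
  shows "t (M1, \<phi> \<circ> \<psi>) = (\<Sum>i<n2. t (M1 \<inter> W, g i) * \<phi> (basis_pt i))"
proof -
  let ?X = "subtopology (T n1) M1" and ?F = "induced_sheaf (T n1) (S n1) M1"
  have sheaf: "sheaf_space K ?X ?F" by (rule sheaf_space_induced_sheaf[OF sheaf_space_T])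
  define U where "U = M1 \<inter> W"
  have U: "openin ?X U" "p \<in> U" unfolding U_def using openin_subtopology_Int2[OF W] p by auto
  have gU: "g i \<in> ?F U" if "i < n2" for i
    using induced_sheaf_of_sheaf[of "T n1" W "g i" "S n1" U M1] W g[OF that] unfolding U_def by blast
  define c where "c i = \<phi> (basis_pt i)" for i
  have c: "c i \<in> K" if "i < n2" for i
    using \<phi> basis_pt_in_kvec[OF that] unfolding kdual_def c_def by blast
  have terms: "(\<lambda>x. c i * g i x) \<in> ?F U" if "i < n2" for i
    by (rule sheaf_space_cmult[OF sheaf U(1) c[OF that] gU[OF that]])
  have "t (M1, \<phi> \<circ> \<psi>) = t (U, \<lambda>x. \<Sum>i<n2. c i * g i x)"
  proof (rule derivation_local[OF der _ p(1) smooth_map_pullback_kdual[OF \<phi>] U])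
    show "openin ?X M1" using M(1) by (simp add: openin_subtopology_refl topspace_T)
    show "(\<lambda>x. \<Sum>i<n2. c i * g i x) \<in> ?F U"
      by (rule sheaf_space_sum[OF sheaf scalars_closed(1) U(1) terms])
    show "\<forall>x\<in>U. (\<phi> \<circ> \<psi>) x = (\<Sum>i<n2. c i * g i x)"
    proof
      fix x assume x: "x \<in> U"
      then have "\<psi> x \<in> kvec K n2"
        using smooth_map_mem_subtopology[OF \<psi>] M topspace_T unfolding U_def by auto
      then have "(\<phi> \<circ> \<psi>) x = (\<Sum>i<n2. \<psi> x i * c i)"
        unfolding comp_def c_def by (rule kdual_expansion[OF \<phi>])
      also have "\<dots> = (\<Sum>i<n2. c i * g i x)"
        by (rule sum.cong) (use coords x in \<open>auto simp: U_def mult.commute\<close>)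
      finally show "(\<phi> \<circ> \<psi>) x = (\<Sum>i<n2. c i * g i x)" .
    qed
  qed (use U in \<open>auto simp: U_def\<close>)
  also have "\<dots> = (\<Sum>i<n2. t (U, \<lambda>x. c i * g i x))"
    by (rule derivation_sum[OF der sheaf scalars_closed(1,2) U terms])
  also have "\<dots> = (\<Sum>i<n2. t (U, g i) * c i)"
    by (rule sum.cong) (simp_all add: derivation_scale[OF der U gU c] mult.commute)
  finally show ?thesis unfolding U_def c_def .
qed

lemma pushforward_in_tangent_set:
  assumes p: "p \<in> M1" and t: "tangent_derivation n1 M1 p v t"
    and w: "w \<in> kvec K n2" "\<forall>\<phi>\<in>kdual K n2. \<phi> w = t (M1, \<phi> \<circ> \<psi>)"
  shows "join n2 (\<psi> p) w \<in> tangent_set K T S n2 M2"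
proof -
  let ?X1 = "subtopology (T n1) M1" and ?X2 = "subtopology (T n2) M2"
    and ?F2 = "induced_sheaf (T n2) (S n2) M2"
  have top: "topspace ?X1 = M1" "topspace ?X2 = M2" using M topspace_T by auto
  have maps: "\<psi> x \<in> M2" if "x \<in> M1" for x
    using smooth_map_mem_subtopology[OF \<psi>] that top by blast
  define t2 where "t2 = pushforward_derivation ?X1 ?X2 ?F2 \<psi> p t"
  have "derivation K ?X2 ?F2 (\<psi> p) t2"
    unfolding t2_def using derivation_pushforward[OF sheaf_space_induced_sheaf[OF sheaf_space_T] \<psi>] t p top
    by blast
  moreover have "\<phi> w = t2 (M2, \<phi>)" if \<phi>: "\<phi> \<in> kdual K n2" for \<phi>
  proof -
    have "\<phi> \<in> ?F2 M2" by (rule kdual_in_induced_sheaf[OF \<phi> M(2)])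
    then have "germ_rep ?X2 ?F2 (\<psi> p) (M2, \<phi>)"
      unfolding germ_rep_def using M(2) maps p by (simp add: openin_subtopology_refl topspace_T)
    moreover have "{x \<in> topspace ?X1. \<psi> x \<in> M2} = M1" using top(1) maps by blast
    ultimately have "t2 (M2, \<phi>) = t (M1, \<phi> \<circ> \<psi>)"
      unfolding t2_def pushforward_derivation_def by simp
    then show ?thesis using w \<phi> by simp
  qed
  ultimately show ?thesis using tangent_setI[of "\<psi> p" M2 w n2 t2] maps p w by blast
qed

lemma chart_derivative_vector:
  assumes W: "openin (T n1) W" and g: "\<And>i. i < n2 \<Longrightarrow> g i \<in> S n1 W"
    and coords: "\<And>i x. i < n2 \<Longrightarrow> x \<in> M1 \<inter> W \<Longrightarrow> \<psi> x i = g i x"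
    and D: "\<And>i. i < n2 \<Longrightarrow> \<forall>p\<in>W. \<forall>\<phi>\<in>kdual K n1.
              in_msq (T n1) (S n1) p (\<lambda>x. g i x - g i p - (\<phi> x - \<phi> p)) \<longrightarrow>
              (\<forall>v\<in>kvec K n1. D i (join n1 p v) = \<phi> v)"
    and p: "p \<in> M1" "p \<in> W" and v: "v \<in> kvec K n1" and t: "tangent_derivation n1 M1 p v t"
  shows "(\<lambda>i. if i < n2 then D i (join n1 p v) else 0) \<in> kvec K n2" (is "?w \<in> _")
    and "\<forall>\<phi>\<in>kdual K n2. \<phi> (\<lambda>i. if i < n2 then D i (join n1 p v) else 0) = t (M1, \<phi> \<circ> \<psi>)"
proof -
  define w where "w = ?w"
  have tD: "t (M1 \<inter> W, g i) = D i (join n1 p v)" if i: "i < n2" for i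
    using derivation_eq_derivative_function[OF M(1) p(1) v t W p(2) g[OF i]] D[OF i] p(2) by blast
  have "w i \<in> K" for i
  proof (cases "i < n2")
    case True
    have "openin (subtopology (T n1) M1) (M1 \<inter> W)" using openin_subtopology_Int2[OF W] .
    moreover have "g i \<in> induced_sheaf (T n1) (S n1) M1 (M1 \<inter> W)"
      using induced_sheaf_of_sheaf[of "T n1" W "g i" "S n1" "M1 \<inter> W" M1] W g[OF True] by blast
    ultimately have "t (M1 \<inter> W, g i) \<in> K" using derivation_in_field t p by blast
    then show ?thesis using tD[OF True] True unfolding w_def by simp
  qed (simp add: w_def scalars_closed(1))
  moreover have "w i = 0" if "\<not> i < n2" for i using that unfolding w_def by simp
  ultimately have w: "w \<in> kvec K n2" unfolding kvec_def by simp
  then show "?w \<in> kvec K n2" unfolding w_def .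
  have "\<forall>\<phi>\<in>kdual K n2. \<phi> w = t (M1, \<phi> \<circ> \<psi>)"
  proof
    fix \<phi> assume \<phi>: "\<phi> \<in> kdual K n2"
    have "\<phi> w = (\<Sum>i<n2. w i * \<phi> (basis_pt i))" by (rule kdual_expansion[OF \<phi> w])
    also have "\<dots> = (\<Sum>i<n2. t (M1 \<inter> W, g i) * \<phi> (basis_pt i))"
      by (rule sum.cong) (simp_all add: w_def tD)
    also have "\<dots> = t (M1, \<phi> \<circ> \<psi>)"
      using derivation_comp_in_coordinates[OF W g coords p] t \<phi> by simp
    finally show "\<phi> w = t (M1, \<phi> \<circ> \<psi>)" .
  qed
  then show "\<forall>\<phi>\<in>kdual K n2. \<phi> ?w = t (M1, \<phi> \<circ> \<psi>)" unfolding w_def .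
qed

lemma differential_in_chart:
  assumes W: "openin (T n1) W" and g: "\<And>i. i < n2 \<Longrightarrow> g i \<in> S n1 W"
    and coords: "\<And>i x. i < n2 \<Longrightarrow> x \<in> M1 \<inter> W \<Longrightarrow> \<psi> x i = g i x"
    and D: "\<And>i. i < n2 \<Longrightarrow> \<forall>p\<in>W. \<forall>\<phi>\<in>kdual K n1.
              in_msq (T n1) (S n1) p (\<lambda>x. g i x - g i p - (\<phi> x - \<phi> p)) \<longrightarrow>
              (\<forall>v\<in>kvec K n1. D i (join n1 p v) = \<phi> v)"
    and p: "p \<in> M1" "p \<in> W" and v: "v \<in> kvec K n1" and t: "tangent_derivation n1 M1 p v t"
  shows "differential K T S n1 M1 n2 \<psi> (join n1 p v) = chart_differential n1 n2 g D (join n1 p v)"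
    and "chart_differential n1 n2 g D (join n1 p v) \<in> tangent_set K T S n2 M2"
proof -
  define w where "w = (\<lambda>i. if i < n2 then D i (join n1 p v) else 0)"
  have w: "w \<in> kvec K n2"
    and push: "\<And>t'. tangent_derivation n1 M1 p v t' \<Longrightarrow> \<forall>\<phi>\<in>kdual K n2. \<phi> w = t' (M1, \<phi> \<circ> \<psi>)"
    using chart_derivative_vector[OF W g coords D p v] t unfolding w_def by blast+
  have pk: "p \<in> kvec K n1" using p M(1) by blast
  have "\<psi> p \<in> kvec K n2" using smooth_map_mem_subtopology[OF \<psi>] p M topspace_T by auto
  then have "\<psi> p = (\<lambda>i. if i < n2 then g i p else 0)" using coords p unfolding kvec_def by auto
  then have chart: "chart_differential n1 n2 g D (join n1 p v) = join n2 (\<psi> p) w"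
    unfolding chart_differential_def fstp_join[OF pk] w_def by simp
  show "differential K T S n1 M1 n2 \<psi> (join n1 p v) = chart_differential n1 n2 g D (join n1 p v)"
    unfolding chart by (rule differential_eqI[OF pk v t w push])
  show "chart_differential n1 n2 g D (join n1 p v) \<in> tangent_set K T S n2 M2"
    unfolding chart by (rule pushforward_in_tangent_set[OF p(1) t w push[OF t]])
qed

lemma differential_local_extension:
  assumes z0: "z0 \<in> tangent_set K T S n1 M1"
  shows "\<exists>V \<Phi>. openin (T (2 * n1)) V \<and> z0 \<in> V \<and>
    smooth_map (subtopology (T (2 * n1)) V) (induced_sheaf (T (2 * n1)) (S (2 * n1)) V)
      (T (2 * n2)) (S (2 * n2)) \<Phi> \<and>
    (\<forall>z\<in>tangent_set K T S n1 M1 \<inter> V.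
      differential K T S n1 M1 n2 \<psi> z = \<Phi> z \<and> \<Phi> z \<in> tangent_set K T S n2 M2)"
proof -
  obtain p0 v0 t0 where z0_eq: "z0 = join n1 p0 v0" and p0: "p0 \<in> M1" and v0: "v0 \<in> kvec K n1"
    using z0 by (rule tangent_setE)
  obtain W g where W: "openin (T n1) W" "p0 \<in> W" and g: "\<And>i. i < n2 \<Longrightarrow> g i \<in> S n1 W"
    and coords: "\<And>i x. i < n2 \<Longrightarrow> x \<in> M1 \<inter> W \<Longrightarrow> \<psi> x i = g i x"
    using smooth_map_local_coordinates[OF p0] by blast
  have Wk: "W \<subseteq> kvec K n1" by (rule openin_T_subset_kvec[OF W(1)])
  define derivative where "derivative i D \<longleftrightarrow> D \<in> S (2 * n1) (tube n1 W) \<and> (\<forall>p\<in>W. \<forall>\<phi>\<in>kdual K n1.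
      in_msq (T n1) (S n1) p (\<lambda>x. g i x - g i p - (\<phi> x - \<phi> p)) \<longrightarrow>
      (\<forall>v\<in>kvec K n1. D (join n1 p v) = \<phi> v))" for i D
  have "\<exists>D. derivative i D" if "i < n2" for i
    using derivative_function_exists[OF W(1) g[OF that]] unfolding tube_eq_image[OF Wk, symmetric] derivative_def
    by blast
  then obtain D where "\<And>i. i < n2 \<Longrightarrow> derivative i (D i)" by metis
  then have D_S: "\<And>i. i < n2 \<Longrightarrow> D i \<in> S (2 * n1) (tube n1 W)"
    and D: "\<And>i. i < n2 \<Longrightarrow> \<forall>p\<in>W. \<forall>\<phi>\<in>kdual K n1.
      in_msq (T n1) (S n1) p (\<lambda>x. g i x - g i p - (\<phi> x - \<phi> p)) \<longrightarrow>
      (\<forall>v\<in>kvec K n1. D i (join n1 p v) = \<phi> v)"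
    unfolding derivative_def by blast+
  have "differential K T S n1 M1 n2 \<psi> z = chart_differential n1 n2 g D z
      \<and> chart_differential n1 n2 g D z \<in> tangent_set K T S n2 M2"
    if z: "z \<in> tangent_set K T S n1 M1 \<inter> tube n1 W" for z
  proof -
    obtain p v t where z_eq: "z = join n1 p v" and p: "p \<in> M1" and v: "v \<in> kvec K n1"
      and t: "tangent_derivation n1 M1 p v t"
      using IntD1[OF z] by (rule tangent_setE)
    have "p \<in> W" using z fstp_join p M(1) unfolding tube_def z_eq by auto
    then show ?thesis using differential_in_chart[OF W(1) g coords D p _ v t] z_eq by simp
  qed
  moreover have "z0 \<in> tube n1 W"
    unfolding tube_def z0_eq using join_in_kvec fstp_join p0 M(1) v0 W(2) by auto
  ultimately show ?thesis
    using tube_pullback(1)[OF W(1)] smooth_map_chart_differential[OF W(1) g D_S]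
    by (intro exI[of _ "tube n1 W"] exI[of _ "chart_differential n1 n2 g D"]) simp
qed

end

end

theorem lemma3p6p15:
  fixes K :: "complex set" and T :: "nat \<Rightarrow> pt topology" and S :: "nat \<Rightarrow> sheaf"
    and n1 n2 :: nat and U1 U2 M1 M2 :: "pt set" and \<psi> :: "pt \<Rightarrow> pt"
  assumes K: "K = \<real> \<or> K = UNIV"
    and fam: "taylor_family K T S"
    and U1: "openin (T n1) U1" and M1: "M1 \<subseteq> U1" "closedin (subtopology (T n1) U1) M1"
    and U2: "openin (T n2) U2" and M2: "M2 \<subseteq> U2" "closedin (subtopology (T n2) U2) M2"
    and psi: "smooth_map (subtopology (T n1) M1) (induced_sheaf (T n1) (S n1) M1)
                         (subtopology (T n2) M2) (induced_sheaf (T n2) (S n2) M2) \<psi>"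
  shows "smooth_map
           (subtopology (T (2 * n1)) (tangent_set K T S n1 M1))
           (induced_sheaf (T (2 * n1)) (S (2 * n1)) (tangent_set K T S n1 M1))
           (subtopology (T (2 * n2)) (tangent_set K T S n2 M2))
           (induced_sheaf (T (2 * n2)) (S (2 * n2)) (tangent_set K T S n2 M2))
           (differential K T S n1 M1 n2 \<psi>)"
proof -
  interpret taylor_sheaves K T S
    using K fam by (simp add: taylor_sheaves_def taylor_sheaves_axioms_def scalar_field_def)
  have M1k: "M1 \<subseteq> kvec K n1" using M1(1) openin_T_subset_kvec[OF U1] by blast
  have M2k: "M2 \<subseteq> kvec K n2" using M2(1) openin_T_subset_kvec[OF U2] by blast
  show ?thesis
  proof (rule smooth_map_induced_if_locally_extends[OF sheaf_space_T])
    show "tangent_set K T S n1 M1 \<subseteq> topspace (T (2 * n1))"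
      using tangent_set_subset_kvec[OF M1k] by (simp add: topspace_T)
  qed (rule differential_local_extension[OF M1k M2k psi])
qed

end
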